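(* Let $\gamma\ge 2$ be an integer, $\delta>0$, and let $\mu$ range over an arbitrary parameter set. Let $F(\rho,\mu)$ be complex valued and, for each $\mu$, smooth in $\rho\in[0,\delta)$; set $a_j(\mu)=\partial_\rho^jF(0,\mu)/j!$. Assume (F1) $a_0(\mu)=a_1(\mu)=0$ for all $\mu$; (F2) there is $C>0$ with $\sum_{j=2}^{\gamma}|a_j(\mu)|\ge C$ for all $\mu$; (F3) for each $\mu$, $|\partial_\rho F(\rho,\mu)|$ is increasing in $\rho$ for $0<\rho<\delta$; (F4') for every $k\in\mathbb{N}$, $\partial_\rho^kF(\rho,\mu)$ is bounded uniformly in $0<\rho<\delta$ and $\mu$. Then, provided $\delta$ is sufficiently small, there exist constants $C>0$ and $C_m>0$ ($m\in\mathbb{N}$) such that for all $0<\rho<\delta$, all $\mu$ and all $m\in\mathbb{N}$, $$|\partial_\rho F(\rho,\mu)|\ge C\rho^{\gamma-1}\qquad\text{and}\qquad |\partial_\rho^mF(\rho,\mu)|\le C_m\rho^{1-m}|\partial_\rho F(\rho,\mu)|.$$ *)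

theory Defs
  imports "HOL-Analysis.Analysis"
begin

end

theory Submission
  imports Defs
begin

(*
  Fix a parameter \<mu> and a radius 0 < r < \<delta>, and let S j be the
  supremum of |\<partial>^j F(\<cdot>,\<mu>)| over [0, r].  Landau's inequality on [0, r] gives, for 0 < s \<le> r/2,
      S j \<le> 2 (S (j-1) / s + s S (j+1)),
  and iterating this "Landau chain" yields a Kolmogorov-type interpolation inequality
      S j \<le> K (S 0 / s^j + s^(N-j) S N)          (j \<le> N)
  with K depending only on j and N.  We apply it to the shifted sequence T i = S (i+1): by
  (F1) and (F3) its first term is T 0 = |\<partial>F(r,\<mu>)|, and by (F4') every T i is bounded uniformly.
  With N = \<gamma> the Taylor coefficients in (F2) are dominated by T 1, ..., T (\<gamma>-1), which forces
  T 0 \<ge> c r^(\<gamma>-1) for small r; with N = \<gamma>-1 the same inequality then gives T j \<le> K j T 0 / r^j.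
*)

lemma norm_diff_le_of_vector_derivative_bound:
  fixes f f' :: "real \<Rightarrow> 'a::real_normed_vector"
  assumes "convex S"
    and der: "\<And>x. x \<in> S \<Longrightarrow> (f has_vector_derivative f' x) (at x within S)"
    and bound: "\<And>x. x \<in> S \<Longrightarrow> norm (f' x) \<le> B"
    and "x \<in> S" "y \<in> S"
  shows "norm (f x - f y) \<le> B * \<bar>x - y\<bar>"
proof -
  have "norm (f x - f y) \<le> B * norm (x - y)"
  proof (rule differentiable_bound[of S f "\<lambda>x h. h *\<^sub>R f' x" B x y])
    show "(f has_derivative (\<lambda>h. h *\<^sub>R f' x)) (at x within S)" if "x \<in> S" for x
      using der[OF that] by (simp add: has_vector_derivative_def)
    show "onorm (\<lambda>h. h *\<^sub>R f' x) \<le> B" if "x \<in> S" for x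
      by (rule onorm_le) (use bound[OF that] in \<open>auto simp: mult.commute[of B] intro!: mult_left_mono\<close>)
  qed (use assms in auto)
  then show ?thesis by simp
qed

text \<open>Proof: Taylor expansion of \<open>f\<close> at \<open>x\<close> towards a point at distance \<open>s\<close> inside \<open>[0, r]\<close>.\<close>

lemma landau_derivative_bound:
  fixes f f' f'' :: "real \<Rightarrow> 'a::real_normed_vector"
  assumes s: "0 < s" "2 * s \<le> r"
    and der0: "\<And>x. x \<in> {0..r} \<Longrightarrow> (f has_vector_derivative f' x) (at x within {0..r})"
    and der1: "\<And>x. x \<in> {0..r} \<Longrightarrow> (f' has_vector_derivative f'' x) (at x within {0..r})"
    and bound0: "\<And>x. x \<in> {0..r} \<Longrightarrow> norm (f x) \<le> M0"
    and bound2: "\<And>x. x \<in> {0..r} \<Longrightarrow> norm (f'' x) \<le> M2"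
    and x: "x \<in> {0..r}"
  shows "norm (f' x) \<le> 2 * M0 / s + s * M2"
proof -
  define y where "y = (if x \<le> r/2 then x + s else x - s)"
  have y: "y \<in> {0..r}" and dist_yx: "\<bar>y - x\<bar> = s"
    using x s by (auto simp: y_def)
  define I where "I = closed_segment x y"
  have I_sub: "I \<subseteq> {0..r}"
    using x y by (auto simp: I_def closed_segment_eq_real_ivl)
  have M2: "0 \<le> M2"
    using bound2[of 0] s by (auto intro: order_trans[OF norm_ge_zero])
  have taylor: "norm (f y - f x - (y - x) *\<^sub>R f' x) \<le> norm (y - x) * (s * M2)"
  proof (rule vector_differentiable_bound_linearization[of I f f' x y x])
    show "(f has_vector_derivative f' z) (at z within I)" if "z \<in> I" for z
      using has_vector_derivative_within_subset[OF der0 I_sub] that I_sub by auto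
    show "norm (f' z - f' x) \<le> s * M2" if z: "z \<in> I" for z
    proof -
      have "norm (f' z - f' x) \<le> M2 * \<bar>z - x\<bar>"
        using has_vector_derivative_within_subset[OF der1 I_sub] I_sub z bound2
        by (intro norm_diff_le_of_vector_derivative_bound[of I f' f'']) (auto simp: I_def)
      also have "\<dots> \<le> M2 * s"
        using z dist_yx M2 by (intro mult_left_mono) (auto simp: I_def closed_segment_eq_real_ivl split: if_splits)
      finally show ?thesis by (simp add: mult.commute)
    qed
  qed (auto simp: I_def)
  have "s * norm (f' x) = norm ((y - x) *\<^sub>R f' x)"
    using dist_yx by simp
  also have "\<dots> \<le> norm (f y) + norm (f x) + norm (f y - f x - (y - x) *\<^sub>R f' x)"
    using norm_triangle_ineq4[of "f y - f x" "f y - f x - (y - x) *\<^sub>R f' x"]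
      norm_triangle_ineq4[of "f y" "f x"] by simp
  also have "\<dots> \<le> 2 * M0 + s * s * M2"
    using bound0[OF x] bound0[OF y] taylor dist_yx by simp
  finally show ?thesis
    using s by (simp add: field_simps)
qed

text \<open>A Landau chain is a nonnegative sequence obeying Landau's inequality with constant \<open>a\<close>
  for every step \<open>s \<le> L\<close>; the suprema of successive derivatives on \<open>[0, r]\<close> form one.\<close>

definition landau_chain :: "real \<Rightarrow> real \<Rightarrow> (nat \<Rightarrow> real) \<Rightarrow> bool" where
  "landau_chain a L S \<longleftrightarrow> (\<forall>j. 0 \<le> S j) \<and>
     (\<forall>j s. 1 \<le> j \<longrightarrow> 0 < s \<longrightarrow> s \<le> L \<longrightarrow> S j \<le> a * (S (j - 1) / s + s * S (Suc j)))"

lemma landau_chainD: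
  assumes "landau_chain a L S"
  shows landau_chain_nonneg: "0 \<le> S j"
    and landau_chain_step: "1 \<le> j \<Longrightarrow> 0 < s \<Longrightarrow> s \<le> L \<Longrightarrow> S j \<le> a * (S (j - 1) / s + s * S (Suc j))"
  using assms by (auto simp: landau_chain_def)

lemma landau_chain_shift: "landau_chain a L S \<Longrightarrow> landau_chain a L (\<lambda>i. S (Suc i))"
  unfolding landau_chain_def
  by (metis Suc_diff_le Suc_le_mono diff_Suc_1 le_SucI)

definition interpolation_constant :: "real \<Rightarrow> nat \<Rightarrow> nat \<Rightarrow> real \<Rightarrow> bool" where
  "interpolation_constant a N j K \<longleftrightarrow> 0 < K \<and>
     (\<forall>S L s. landau_chain a L S \<longrightarrow> 0 < s \<longrightarrow> s \<le> L \<longrightarrow> S j \<le> K * (S 0 / s ^ j + s ^ (N - j) * S N))"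

lemma interpolation_constantI:
  assumes "0 < K"
    and "\<And>S L s. landau_chain a L S \<Longrightarrow> 0 < s \<Longrightarrow> s \<le> L \<Longrightarrow> S j \<le> K * (S 0 / s ^ j + s ^ (N - j) * S N)"
  shows "interpolation_constant a N j K"
  using assms by (auto simp: interpolation_constant_def)

lemma interpolation_constantD:
  assumes "interpolation_constant a N j K" "landau_chain a L S" "0 < s" "s \<le> L"
  shows "S j \<le> K * (S 0 / s ^ j + s ^ (N - j) * S N)"
  using assms by (auto simp: interpolation_constant_def)

lemma interpolation_constant_pos: "interpolation_constant a N j K \<Longrightarrow> 0 < K"
  by (simp add: interpolation_constant_def)

lemma interpolation_constant_endpoints:
  assumes "j = 0 \<or> j = N"
  shows "interpolation_constant a N j 1"
  using assms by (auto intro!: interpolation_constantI simp: landau_chain_nonneg)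

lemma interpolation_constant_first_base:
  assumes "0 < a"
  shows "interpolation_constant a 2 1 a"
  using assms by (auto intro!: interpolation_constantI simp: landau_chain_step[of a _ _ 1, simplified] numeral_2_eq_2)

text \<open>Key step for \<open>j = 1\<close>: combine the inequality for \<open>(N, 1)\<close> at the smaller step \<open>s / c\<close> with the
  one for \<open>(N, N-1)\<close> applied to the shifted chain; for large \<open>c\<close> the resulting multiple of
  \<open>S 1\<close> on the right can be absorbed into the left-hand side.\<close>

lemma interpolation_constant_first_step:
  assumes N: "2 \<le> N"
    and K1: "interpolation_constant a N 1 K1"
    and K2: "interpolation_constant a N (N - 1) K2"
  shows "interpolation_constant a (Suc N) 1 (2 * K1 * (2 * K1 * K2 + 1) + 2 * K1 * K2)"
proof -
  define c where "c = 2 * K1 * K2 + 1"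
  have K1_pos: "0 < K1" and K2_pos: "0 < K2"
    using K1 K2 by (auto dest: interpolation_constant_pos)
  have KK: "0 < K1 * K2"
    using K1_pos K2_pos by simp
  then have c: "1 \<le> c" "0 < c" "K1 * K2 / c \<le> 1 / 2"
    by (simp_all add: c_def field_simps)
  show ?thesis
    unfolding c_def[symmetric]
  proof (rule interpolation_constantI)
    show "0 < 2 * K1 * c + 2 * K1 * K2"
      using K1_pos K2_pos c by (simp add: add_pos_pos)
    fix S L s
    assume chain: "landau_chain a L S" and s: "0 < s" "s \<le> L"
    define s0 where "s0 = s / c"
    have s0: "0 < s0" "s0 \<le> s"
      using s c by (auto simp: s0_def field_simps)
    have S_nonneg: "0 \<le> S j" for j
      using chain by (rule landau_chain_nonneg)
    have at_s0: "S 1 \<le> K1 * (S 0 / s0 + s0 ^ (N - 1) * S N)"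
      using interpolation_constantD[OF K1 chain s0(1)] s0 s by simp
    have shifted: "S N \<le> K2 * (S 1 / s ^ (N - 1) + s * S (Suc N))"
      using interpolation_constantD[OF K2 landau_chain_shift[OF chain] s] N by (simp add: Suc_diff_1)
    have ratio: "s0 ^ (N - 1) / s ^ (N - 1) \<le> 1 / c"
    proof -
      have "c \<le> c ^ (N - 1)"
        using power_increasing[of 1 "N - 1" c] c N by simp
      then show ?thesis
        using c s by (simp add: s0_def power_divide divide_left_mono)
    qed
    have small_power: "s0 ^ (N - 1) * s \<le> s ^ N"
    proof -
      have "s0 ^ (N - 1) * s \<le> s ^ (N - 1) * s"
        using s0 s by (intro mult_right_mono power_mono) auto
      also have "\<dots> = s ^ N"
        using N by (simp add: power_Suc2[symmetric])
      finally show ?thesis .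
    qed
    have "K1 * s0 ^ (N - 1) * S N
        \<le> K1 * K2 * (s0 ^ (N - 1) / s ^ (N - 1)) * S 1 + K1 * K2 * (s0 ^ (N - 1) * s) * S (Suc N)"
      using mult_left_mono[OF shifted, of "K1 * s0 ^ (N - 1)"] K1_pos s0
      by (simp add: algebra_simps)
    also have "\<dots> \<le> K1 * K2 * (1 / c) * S 1 + K1 * K2 * s ^ N * S (Suc N)"
      using mult_left_mono[OF ratio, of "K1 * K2"] mult_left_mono[OF small_power, of "K1 * K2"] KK S_nonneg
      by (intro add_mono mult_right_mono) (auto simp: mult.assoc)
    also have "\<dots> \<le> S 1 / 2 + K1 * K2 * s ^ N * S (Suc N)"
      using mult_right_mono[OF c(3) S_nonneg[of 1]] by simp
    finally have absorbed: "K1 * s0 ^ (N - 1) * S N \<le> S 1 / 2 + K1 * K2 * s ^ N * S (Suc N)" .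
    have "S 1 \<le> K1 * S 0 / s0 + K1 * s0 ^ (N - 1) * S N"
      using at_s0 by (simp add: algebra_simps)
    moreover have "K1 * S 0 / s0 = K1 * c * (S 0 / s)"
      using c s by (simp add: s0_def field_simps)
    ultimately have "S 1 \<le> 2 * K1 * c * (S 0 / s) + 2 * K1 * K2 * (s ^ N * S (Suc N))"
      using absorbed by linarith
    also have "\<dots> \<le> (2 * K1 * c + 2 * K1 * K2) * (S 0 / s + s ^ N * S (Suc N))"
      using K1_pos K2_pos c S_nonneg s by (simp add: algebra_simps)
    finally show "S 1 \<le> (2 * K1 * c + 2 * K1 * K2) * (S 0 / s ^ 1 + s ^ (Suc N - 1) * S (Suc N))"
      by simp
  qed
qed

text \<open>For \<open>1 \<le> j \<le> N\<close>, the inequality for \<open>(N+1, j)\<close> follows from the one for \<open>(N, j-1)\<close>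
  applied to the shifted chain, combined with the one for \<open>(N+1, 1)\<close>.\<close>

lemma interpolation_constant_shift_step:
  assumes j: "1 \<le> j" "j \<le> N"
    and K: "interpolation_constant a (Suc N) 1 K"
    and K3: "interpolation_constant a N (j - 1) K3"
  shows "interpolation_constant a (Suc N) j (K3 * (K + 1))"
proof (rule interpolation_constantI)
  have K_pos: "0 < K" and K3_pos: "0 < K3"
    using K K3 by (auto dest: interpolation_constant_pos)
  then show "0 < K3 * (K + 1)"
    by simp
  fix S L s
  assume chain: "landau_chain a L S" and s: "0 < s" "s \<le> L"
  define X where "X = S 0 / s ^ j + s ^ (Suc N - j) * S (Suc N)"
  have S_nonneg: "0 \<le> S i" for i
    using chain by (rule landau_chain_nonneg)
  have tail_le_X: "s ^ (Suc N - j) * S (Suc N) \<le> X"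
    using S_nonneg s by (simp add: X_def)
  have shifted: "S j \<le> K3 * (S 1 / s ^ (j - 1) + s ^ (Suc N - j) * S (Suc N))"
    using interpolation_constantD[OF K3 landau_chain_shift[OF chain] s] j by (simp add: Suc_diff_le)
  have powers: "s * s ^ (j - 1) = s ^ j" "s ^ N = s ^ (Suc N - j) * s ^ (j - 1)"
    using j by (simp_all add: power_Suc[symmetric] power_add[symmetric])
  have "S 1 / s ^ (j - 1) \<le> K * (S 0 / s ^ 1 + s ^ (Suc N - 1) * S (Suc N)) / s ^ (j - 1)"
    using interpolation_constantD[OF K chain s] s by (intro divide_right_mono) auto
  also have "\<dots> = K * X"
    using s powers by (simp add: X_def field_simps)
  finally have "S j \<le> K3 * (K * X + s ^ (Suc N - j) * S (Suc N))"
    using shifted K3_pos by (smt (verit) mult_left_mono)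
  also have "\<dots> \<le> K3 * (K + 1) * X"
    using tail_le_X K3_pos by (simp add: algebra_simps)
  finally show "S j \<le> K3 * (K + 1) * (S 0 / s ^ j + s ^ (Suc N - j) * S (Suc N))"
    by (simp add: X_def)
qed

lemma interpolation_constant_exists:
  assumes "0 < a" "j \<le> N"
  shows "\<exists>K. interpolation_constant a N j K"
  using assms(2)
proof (induction N arbitrary: j)
  case 0
  then show ?case
    using interpolation_constant_endpoints by auto
next
  case (Suc N)
  show ?case
  proof (cases "j = 0 \<or> j = Suc N")
    case True
    then show ?thesis
      using interpolation_constant_endpoints by blast
  next
    case False
    then have j: "1 \<le> j" "j \<le> N" "1 \<le> N"
      using Suc.prems by auto
    have "\<exists>K. interpolation_constant a (Suc N) 1 K"
    proof (cases "N = 1")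
      case True
      then show ?thesis
        using interpolation_constant_first_base[OF assms(1)] by (auto simp: numeral_2_eq_2)
    next
      case False
      then show ?thesis
        using interpolation_constant_first_step[of N] Suc.IH[of 1] Suc.IH[of "N - 1"] j by auto
    qed
    then show ?thesis
      using interpolation_constant_shift_step[OF j(1,2)] Suc.IH[of "j - 1"] j by fastforce
  qed
qed

lemma interpolation_constant_family:
  assumes "0 < a"
  obtains K where "\<And>j. j \<le> N \<Longrightarrow> interpolation_constant a N j (K j)"
proof -
  have "\<forall>j. \<exists>K. j \<le> N \<longrightarrow> interpolation_constant a N j K"
    using interpolation_constant_exists[OF assms] by blast
  then show ?thesis
    using that by metis
qed

text \<open>If the middle terms of a Landau chain (with step bound \<open>r/2\<close>) have total size at least
  \<open>C0\<close> while its top term \<open>T N\<close> stays bounded, the interpolation inequality forces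
  \<open>T 0 \<ge> c r^(N-1)\<close> for all small \<open>r\<close>: the top contributions are \<open>O(r)\<close>, so for
  small \<open>r\<close> the \<open>T 0\<close> contributions must carry half of \<open>C0\<close>.\<close>

lemma landau_chain_lower_bound:
  assumes a: "0 < a" and N: "2 \<le> N" and C0: "0 < C0"
  obtains c \<rho>0 where "0 < c" "0 < \<rho>0"
    "\<And>T r. landau_chain a (r / 2) T \<Longrightarrow> 0 < r \<Longrightarrow> r \<le> \<rho>0 \<Longrightarrow> T N \<le> B \<Longrightarrow>
       C0 \<le> (\<Sum>k=1..<N. T k) \<Longrightarrow> c * r ^ (N - 1) \<le> T 0"
proof -
  obtain KB where KB: "\<And>k. k \<le> N \<Longrightarrow> interpolation_constant a N k (KB k)"
    using interpolation_constant_family[OF a] by blast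
  have KB_pos: "0 < KB k" if "k \<le> N" for k
    using KB[OF that] by (rule interpolation_constant_pos)
  define Ktot where "Ktot = (\<Sum>k=1..<N. KB k)"
  have Ktot: "0 < Ktot"
    unfolding Ktot_def using N KB_pos by (intro sum_pos) auto
  define B' where "B' = \<bar>B\<bar> + 1"
  have B': "0 < B'" "B \<le> B'"
    by (auto simp: B'_def)
  define \<rho>0 where "\<rho>0 = min 1 (C0 / (2 * Ktot * B'))"
  have \<rho>0: "0 < \<rho>0" "\<rho>0 \<le> 1" "Ktot * \<rho>0 * B' \<le> C0 / 2"
    using C0 Ktot B' by (auto simp: \<rho>0_def min_def field_simps)
  show ?thesis
  proof (rule that[of "C0 / (2 * Ktot * 2 ^ N)" \<rho>0])
    show "0 < C0 / (2 * Ktot * 2 ^ N)"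
      using C0 Ktot by simp
    fix T r
    assume chain: "landau_chain a (r / 2) T" and r: "0 < r" "r \<le> \<rho>0"
      and top: "T N \<le> B" and middle: "C0 \<le> (\<Sum>k=1..<N. T k)"
    define X where "X = 2 ^ N * T 0 / r ^ (N - 1)"
    have T_nonneg: "0 \<le> T i" for i
      using chain by (rule landau_chain_nonneg)
    have term_bound: "T k \<le> KB k * (X + r * B')" if k: "k \<in> {1..<N}" for k
    proof -
      have "T k \<le> KB k * (T 0 / (r / 2) ^ k + (r / 2) ^ (N - k) * T N)"
        using interpolation_constantD[OF KB chain] k r by auto
      also have "\<dots> \<le> KB k * (X + r * B')"
      proof (intro mult_left_mono add_mono)
        have "T 0 / (r / 2) ^ k = 2 ^ k * T 0 / r ^ k"
          by (simp add: power_divide)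
        also have "\<dots> \<le> 2 ^ N * T 0 / r ^ (N - 1)"
          using T_nonneg[of 0] r \<rho>0 k
          by (intro frac_le mult_right_mono power_increasing power_decreasing) auto
        finally show "T 0 / (r / 2) ^ k \<le> X"
          by (simp add: X_def)
        have "(r / 2) ^ (N - k) \<le> (r / 2) ^ 1"
          using r \<rho>0 k by (intro power_decreasing) auto
        then show "(r / 2) ^ (N - k) * T N \<le> r * B'"
          using top B' T_nonneg[of N] r by (intro mult_mono) auto
        show "0 \<le> KB k"
          using KB_pos[of k] k by simp
      qed
      finally show ?thesis .
    qed
    have "(\<Sum>k=1..<N. T k) \<le> (\<Sum>k=1..<N. KB k * (X + r * B'))"
      by (rule sum_mono) (rule term_bound)
    with middle have "C0 \<le> (\<Sum>k=1..<N. KB k * (X + r * B'))"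
      by linarith
    also have "\<dots> = Ktot * X + Ktot * r * B'"
      by (simp add: Ktot_def sum.distrib sum_distrib_left sum_distrib_right algebra_simps)
    also have "Ktot * r * B' \<le> C0 / 2"
      using \<rho>0(3) r Ktot B' by (smt (verit) mult_left_mono mult_right_mono)
    finally have "C0 / 2 \<le> Ktot * X"
      by simp
    then show "C0 / (2 * Ktot * 2 ^ N) * r ^ (N - 1) \<le> T 0"
      using Ktot r by (simp add: X_def field_simps)
  qed (rule \<rho>0(1))
qed

text \<open>Conversely, if \<open>T 0 \<ge> c r^N\<close> and all terms are bounded, then \<open>T j \<le> K j T 0 / r^j\<close>:
  for \<open>j \<le> N\<close> by interpolation at step \<open>r/2\<close>, for \<open>j > N\<close> directly from the bound.\<close>

lemma landau_chain_upper_bound: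
  assumes a: "0 < a" and c: "0 < c"
  obtains K where "\<And>j. 0 < K j"
    "\<And>j T r. landau_chain a (r / 2) T \<Longrightarrow> 0 < r \<Longrightarrow> r \<le> 1 \<Longrightarrow> \<forall>i. T i \<le> B i \<Longrightarrow>
       c * r ^ N \<le> T 0 \<Longrightarrow> T j \<le> K j * T 0 / r ^ j"
proof -
  obtain KA where KA: "\<And>j. j \<le> N \<Longrightarrow> interpolation_constant a N j (KA j)"
    using interpolation_constant_family[OF a] by blast
  have KA_pos: "0 < KA j" if "j \<le> N" for j
    using KA[OF that] by (rule interpolation_constant_pos)
  define K where "K j = (if j \<le> N then KA j * (2 ^ j + \<bar>B N\<bar> / c) else \<bar>B j\<bar> / c + 1)" for j
  show ?thesis
  proof (rule that[of K])
    show "0 < K j" for j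
      using KA_pos[of j] c by (simp add: K_def add_pos_nonneg add_nonneg_pos)
    fix j T r
    assume chain: "landau_chain a (r / 2) T" and r: "0 < r" "r \<le> 1"
      and bounds: "\<forall>i. T i \<le> B i" and dominant: "c * r ^ N \<le> T 0"
    have T_nonneg: "0 \<le> T i" for i
      using chain by (rule landau_chain_nonneg)
    show "T j \<le> K j * T 0 / r ^ j"
    proof (cases "j \<le> N")
      case True
      have power_split: "r ^ (N - j) = r ^ N / r ^ j"
        using True r by (simp add: power_diff)
      have "(r / 2) ^ (N - j) * T N \<le> r ^ N / r ^ j * \<bar>B N\<bar>"
        using bounds[rule_format, of N] abs_ge_self[of "B N"] T_nonneg[of N] r unfolding power_split[symmetric]
        by (intro mult_mono power_mono) auto
      also have "\<dots> \<le> T 0 / c / r ^ j * \<bar>B N\<bar>"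
        using dominant c r by (intro mult_right_mono divide_right_mono) (auto simp: field_simps)
      finally have top: "(r / 2) ^ (N - j) * T N \<le> \<bar>B N\<bar> / c * T 0 / r ^ j"
        by (simp add: mult.commute)
      have "T j \<le> KA j * (T 0 / (r / 2) ^ j + (r / 2) ^ (N - j) * T N)"
        using interpolation_constantD[OF KA[OF True] chain] r by simp
      also have "\<dots> \<le> KA j * (2 ^ j * T 0 / r ^ j + \<bar>B N\<bar> / c * T 0 / r ^ j)"
        using top KA_pos[OF True] by (intro mult_left_mono add_mono) (auto simp: power_divide mult.commute)
      finally show ?thesis
        using True by (simp add: K_def algebra_simps add_divide_distrib)
    next
      case False
      have "c * r ^ j \<le> c * r ^ N"
        using False c r by (intro mult_left_mono power_decreasing) auto
      then have "c * r ^ j \<le> T 0"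
        using dominant by linarith
      then have "1 \<le> T 0 / (c * r ^ j)"
        using c r by (simp add: le_divide_eq)
      then have "\<bar>B j\<bar> * 1 \<le> \<bar>B j\<bar> * (T 0 / (c * r ^ j))"
        by (intro mult_left_mono) auto
      also have "\<dots> \<le> K j * T 0 / r ^ j"
        using False T_nonneg[of 0] r c by (simp add: K_def field_simps)
      finally show ?thesis
        using bounds[rule_format, of j] abs_ge_self[of "B j"] by linarith
    qed
  qed
qed

definition local_sup :: "(nat \<Rightarrow> real \<Rightarrow> 'a::real_normed_vector) \<Rightarrow> real \<Rightarrow> nat \<Rightarrow> real" where
  "local_sup d r j = (SUP x\<in>{0..r}. norm (d j x))"

locale derivative_tower =
  fixes d :: "nat \<Rightarrow> real \<Rightarrow> 'a::real_normed_field" and \<delta> :: real and B :: "nat \<Rightarrow> real"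
  assumes has_derivative:
      "\<And>k \<rho>. \<rho> \<in> {0..<\<delta>} \<Longrightarrow> (d k has_vector_derivative d (Suc k) \<rho>) (at \<rho> within {0..<\<delta>})"
    and bounded: "\<And>k \<rho>. 0 \<le> \<rho> \<Longrightarrow> \<rho> < \<delta> \<Longrightarrow> norm (d k \<rho>) \<le> B k"
begin

lemma has_derivative_on_interval:
  assumes "r < \<delta>" "x \<in> {0..r}"
  shows "(d k has_vector_derivative d (Suc k) x) (at x within {0..r})"
  using assms by (intro has_vector_derivative_within_subset[OF has_derivative]) auto

lemma local_sup_upper:
  assumes "r < \<delta>" "x \<in> {0..r}"
  shows "norm (d j x) \<le> local_sup d r j"
proof -
  have "bdd_above ((\<lambda>x. norm (d j x)) ` {0..r})"
    using bounded assms(1) by (intro bdd_aboveI[of _ "B j"]) auto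
  then show ?thesis
    unfolding local_sup_def using assms(2) by (rule cSUP_upper2) simp
qed

lemma local_sup_nonneg: "0 \<le> r \<Longrightarrow> r < \<delta> \<Longrightarrow> 0 \<le> local_sup d r j"
  using order_trans[OF norm_ge_zero local_sup_upper[of r 0 j]] by simp

lemma local_sup_le_bound: "0 \<le> r \<Longrightarrow> r < \<delta> \<Longrightarrow> local_sup d r j \<le> B j"
  unfolding local_sup_def using bounded by (intro cSUP_least) auto

lemma local_sup_chain:
  assumes r: "0 < r" "r < \<delta>"
  shows "landau_chain 2 (r / 2) (local_sup d r)"
  unfolding landau_chain_def
proof (intro conjI allI impI)
  show "0 \<le> local_sup d r j" for j
    using r by (simp add: local_sup_nonneg)
  fix j :: nat and s :: real
  assume j: "1 \<le> j" and s: "0 < s" "s \<le> r / 2"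
  have "norm (d j x) \<le> 2 * local_sup d r (j - 1) / s + s * local_sup d r (Suc j)" if x: "x \<in> {0..r}" for x
  proof (rule landau_derivative_bound[where f = "d (j - 1)" and f'' = "d (Suc j)"])
    show "(d (j - 1) has_vector_derivative d j y) (at y within {0..r})" if "y \<in> {0..r}" for y
      using has_derivative_on_interval[OF r(2) that, of "j - 1"] j by simp
  qed (use s x r in \<open>auto intro: has_derivative_on_interval local_sup_upper\<close>)
  then have "local_sup d r j \<le> 2 * local_sup d r (j - 1) / s + s * local_sup d r (Suc j)"
    unfolding local_sup_def[of d r j] using r by (intro cSUP_least) auto
  moreover have "0 \<le> s * local_sup d r (Suc j)"
    using s r by (simp add: local_sup_nonneg)
  ultimately show "local_sup d r j \<le> 2 * (local_sup d r (j - 1) / s + s * local_sup d r (Suc j))"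
    by (simp add: distrib_left)
qed

text \<open>The hypotheses (F1) and (F3) of the theorem: the first derivative vanishes at the
  origin and its modulus is increasing, so its supremum over \<open>[0, r]\<close> is attained at \<open>r\<close>.\<close>

context
  assumes first_vanishes: "d 1 0 = 0"
    and first_mono: "mono_on {0<..<\<delta>} (\<lambda>\<rho>. norm (d 1 \<rho>))"
begin

lemma first_le_endpoint:
  assumes "r < \<delta>" "x \<in> {0..r}"
  shows "norm (d 1 x) \<le> norm (d 1 r)"
  using assms first_vanishes mono_onD[OF first_mono, of x r] by (cases "x = 0") auto

lemma local_sup_first:
  assumes "0 < r" "r < \<delta>"
  shows "local_sup d r 1 = norm (d 1 r)"
proof (rule antisym)
  show "local_sup d r 1 \<le> norm (d 1 r)"
    unfolding local_sup_def using assms first_le_endpoint by (intro cSUP_least) auto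
  show "norm (d 1 r) \<le> local_sup d r 1"
    using assms by (intro local_sup_upper) auto
qed

lemma zeroth_le:
  assumes "d 0 0 = 0" "0 < r" "r < \<delta>"
  shows "norm (d 0 r) \<le> r * norm (d 1 r)"
proof -
  have "norm (d 0 r - d 0 0) \<le> norm (d 1 r) * \<bar>r - 0\<bar>"
    using assms has_derivative_on_interval first_le_endpoint
    by (intro norm_diff_le_of_vector_derivative_bound[of "{0..r}" "d 0" "d 1"]) auto
  then show ?thesis
    using assms by (simp add: mult.commute)
qed

lemma shifted_local_sup:
  assumes r: "0 < r" "r < \<delta>"
  defines "T \<equiv> \<lambda>i. local_sup d r (Suc i)"
  shows "landau_chain 2 (r / 2) T"
    and "T 0 = norm (d 1 r)"
    and "T i \<le> B (Suc i)"
    and "norm (d (Suc i) r) \<le> T i"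
    and "(\<Sum>j=2..N. norm (d j 0 / of_nat (fact j))) \<le> (\<Sum>k=1..<N. T k)"
proof -
  show "landau_chain 2 (r / 2) T"
    unfolding T_def by (rule landau_chain_shift[OF local_sup_chain[OF r]])
  show "T 0 = norm (d 1 r)"
    using local_sup_first[OF r] by (simp add: T_def)
  show "T i \<le> B (Suc i)"
    using r by (simp add: T_def local_sup_le_bound)
  show "norm (d (Suc i) r) \<le> T i"
    using r by (simp add: T_def local_sup_upper)
  have "norm (d j 0 / of_nat (fact j)) \<le> local_sup d r j" for j
  proof -
    have "norm (d j 0 / of_nat (fact j)) \<le> norm (d j 0)"
      by (simp add: norm_divide divide_le_eq fact_ge_1 mult_le_cancel_left1)
    also have "\<dots> \<le> local_sup d r j"
      using r by (intro local_sup_upper) auto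
    finally show ?thesis .
  qed
  then have "(\<Sum>j=2..N. norm (d j 0 / of_nat (fact j))) \<le> (\<Sum>j=2..N. local_sup d r j)"
    by (rule sum_mono)
  also have "\<dots> = (\<Sum>k=1..<N. T k)"
    unfolding T_def atLeastLessThanSuc_atLeastAtMost[symmetric] numeral_2_eq_2
    by (subst sum.shift_bounds_Suc_ivl) simp
  finally show "(\<Sum>j=2..N. norm (d j 0 / of_nat (fact j))) \<le> (\<Sum>k=1..<N. T k)" .
qed

end

end

lemma norm_bound_at_left_endpoint:
  fixes f :: "real \<Rightarrow> 'a::real_normed_vector" and f' :: 'a
  assumes \<delta>: "0 < \<delta>"
    and der: "(f has_vector_derivative f') (at 0 within {0..<\<delta>})"
    and bound: "\<And>r. 0 < r \<Longrightarrow> r < \<delta> \<Longrightarrow> norm (f r) \<le> B"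
  shows "norm (f 0) \<le> B"
proof -
  have "(f has_vector_derivative f') (at 0 within {0..\<delta>/2})"
    by (rule has_vector_derivative_within_subset[OF der]) (use \<delta> in auto)
  then have "continuous (at 0 within {0..\<delta>/2}) f"
    by (rule has_vector_derivative_continuous)
  then have "(f \<longlongrightarrow> f 0) (at_right 0)"
    using \<delta> by (simp add: continuous_within at_within_Icc_at_right)
  moreover have "eventually (\<lambda>r. norm (f r) \<le> B) (at_right 0)"
    using eventually_at_right_real[OF \<delta>] by eventually_elim (auto intro: bound)
  ultimately show ?thesis
    by (intro Lim_norm_ubound[of "at_right 0" f]) auto
qed

lemma uniform_bounds_up_to_endpoint:
  fixes D :: "nat \<Rightarrow> real \<Rightarrow> 'm \<Rightarrow> 'a::real_normed_vector"
  assumes \<delta>: "0 < \<delta>"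
    and smooth: "\<And>k \<mu> \<rho>. \<rho> \<in> {0..<\<delta>} \<Longrightarrow>
        ((\<lambda>r. D k r \<mu>) has_vector_derivative D (Suc k) \<rho> \<mu>) (at \<rho> within {0..<\<delta>})"
    and bounded: "\<And>k. \<exists>B. \<forall>\<mu> \<rho>. 0 < \<rho> \<and> \<rho> < \<delta> \<longrightarrow> norm (D k \<rho> \<mu>) \<le> B"
  obtains B where "\<And>k \<mu> \<rho>. 0 \<le> \<rho> \<Longrightarrow> \<rho> < \<delta> \<Longrightarrow> norm (D k \<rho> \<mu>) \<le> B k"
proof -
  have "\<exists>B. \<forall>\<mu> \<rho>. 0 \<le> \<rho> \<and> \<rho> < \<delta> \<longrightarrow> norm (D k \<rho> \<mu>) \<le> B" for k
  proof -
    obtain B where B: "\<And>\<mu> \<rho>. 0 < \<rho> \<Longrightarrow> \<rho> < \<delta> \<Longrightarrow> norm (D k \<rho> \<mu>) \<le> B"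
      using bounded[of k] by blast
    have "norm (D k 0 \<mu>) \<le> B" for \<mu>
      using \<delta> smooth B by (intro norm_bound_at_left_endpoint[of \<delta> "\<lambda>r. D k r \<mu>"]) auto
    then show ?thesis
      using B by (metis order_le_less)
  qed
  then show ?thesis
    using that by metis
qed

lemma powr_one_minus_Suc:
  assumes "0 < r"
  shows "r powr (1 - real (Suc m)) = 1 / r ^ m"
  using assms by (simp add: powr_minus powr_realpow divide_inverse)

lemma tower_lower_estimate:
  fixes B :: "nat \<Rightarrow> real"
  assumes \<gamma>: "2 \<le> \<gamma>" and C0: "0 < C0"
  obtains c \<rho>0 where "0 < c" "0 < \<rho>0"
    "\<And>(d :: nat \<Rightarrow> real \<Rightarrow> 'a::real_normed_field) r. derivative_tower d \<delta> B \<Longrightarrow> d 1 0 = 0 \<Longrightarrow>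
       mono_on {0<..<\<delta>} (\<lambda>\<rho>. norm (d 1 \<rho>)) \<Longrightarrow> C0 \<le> (\<Sum>j=2..\<gamma>. norm (d j 0 / of_nat (fact j))) \<Longrightarrow>
       0 < r \<Longrightarrow> r < \<delta> \<Longrightarrow> r \<le> \<rho>0 \<Longrightarrow> c * r ^ (\<gamma> - 1) \<le> norm (d 1 r)"
proof -
  obtain c \<rho>0 where c: "0 < c" and \<rho>0: "0 < \<rho>0" and lower_chain:
    "\<And>T r. landau_chain 2 (r / 2) T \<Longrightarrow> 0 < r \<Longrightarrow> r \<le> \<rho>0 \<Longrightarrow> T \<gamma> \<le> B (Suc \<gamma>) \<Longrightarrow>
       C0 \<le> (\<Sum>k=1..<\<gamma>. T k) \<Longrightarrow> c * r ^ (\<gamma> - 1) \<le> T 0"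
    using landau_chain_lower_bound[where a = 2 and B = "B (Suc \<gamma>)", OF _ \<gamma> C0] by auto
  show ?thesis
  proof (rule that[OF c \<rho>0])
    fix d :: "nat \<Rightarrow> real \<Rightarrow> 'a" and r
    assume tower: "derivative_tower d \<delta> B" and vanish: "d 1 0 = 0"
      and mono: "mono_on {0<..<\<delta>} (\<lambda>\<rho>. norm (d 1 \<rho>))"
      and coefficients: "C0 \<le> (\<Sum>j=2..\<gamma>. norm (d j 0 / of_nat (fact j)))"
      and r: "0 < r" "r < \<delta>" "r \<le> \<rho>0"
    note T = derivative_tower.shifted_local_sup[OF tower vanish mono r(1,2)]
    show "c * r ^ (\<gamma> - 1) \<le> norm (d 1 r)"
      using lower_chain[OF T(1) r(1,3) T(3) order_trans[OF coefficients T(5)]] T(2) by simp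
  qed
qed

lemma tower_upper_estimate:
  fixes B :: "nat \<Rightarrow> real"
  assumes c: "0 < c"
  obtains Cm where "\<And>m. 0 < Cm m"
    "\<And>(d :: nat \<Rightarrow> real \<Rightarrow> 'a::real_normed_field) r m. derivative_tower d \<delta> B \<Longrightarrow> d 0 0 = 0 \<Longrightarrow>
       d 1 0 = 0 \<Longrightarrow> mono_on {0<..<\<delta>} (\<lambda>\<rho>. norm (d 1 \<rho>)) \<Longrightarrow> 0 < r \<Longrightarrow> r < \<delta> \<Longrightarrow> r \<le> 1 \<Longrightarrow>
       c * r ^ N \<le> norm (d 1 r) \<Longrightarrow> norm (d m r) \<le> Cm m * r powr (1 - real m) * norm (d 1 r)"
proof -
  obtain K where K: "\<And>j. 0 < K j" and upper_chain:
    "\<And>j T r. landau_chain 2 (r / 2) T \<Longrightarrow> 0 < r \<Longrightarrow> r \<le> 1 \<Longrightarrow> \<forall>i. T i \<le> B (Suc i) \<Longrightarrow>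
       c * r ^ N \<le> T 0 \<Longrightarrow> T j \<le> K j * T 0 / r ^ j"
    using landau_chain_upper_bound[where a = 2 and B = "\<lambda>i. B (Suc i)", OF _ c] by auto
  define Cm where "Cm m = (case m of 0 \<Rightarrow> 1 | Suc j \<Rightarrow> K j)" for m
  show ?thesis
  proof (rule that)
    show "0 < Cm m" for m
      using K by (simp add: Cm_def split: nat.split)
    fix d :: "nat \<Rightarrow> real \<Rightarrow> 'a" and r m
    assume tower: "derivative_tower d \<delta> B" and vanish: "d 0 0 = 0" "d 1 0 = 0"
      and mono: "mono_on {0<..<\<delta>} (\<lambda>\<rho>. norm (d 1 \<rho>))"
      and r: "0 < r" "r < \<delta>" "r \<le> 1" and lower: "c * r ^ N \<le> norm (d 1 r)"
    note T = derivative_tower.shifted_local_sup[OF tower vanish(2) mono r(1,2)]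
    show "norm (d m r) \<le> Cm m * r powr (1 - real m) * norm (d 1 r)"
    proof (cases m)
      case 0
      then show ?thesis
        using derivative_tower.zeroth_le[OF tower vanish(2) mono vanish(1) r(1,2)] r by (simp add: Cm_def)
    next
      case (Suc j)
      have "norm (d (Suc j) r) \<le> K j * norm (d 1 r) / r ^ j"
        using order_trans[OF T(4) upper_chain[OF T(1) r(1,3)]] T(2,3) lower by simp
      then show ?thesis
        unfolding Suc Cm_def powr_one_minus_Suc[OF r(1)] by simp
    qed
  qed
qed

theorem mainTheorem3:
  fixes F :: "real \<Rightarrow> 'm \<Rightarrow> complex"
    and D :: "nat \<Rightarrow> real \<Rightarrow> 'm \<Rightarrow> complex"
    and \<gamma> :: nat and \<delta> :: real
  assumes gamma: "\<gamma> \<ge> 2"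
    and delta: "\<delta> > 0"
    and D0: "\<And>\<rho> \<mu>. D 0 \<rho> \<mu> = F \<rho> \<mu>"
    and smooth: "\<And>k \<mu> \<rho>. \<rho> \<in> {0..<\<delta>} \<Longrightarrow>
        ((\<lambda>r. D k r \<mu>) has_vector_derivative D (Suc k) \<rho> \<mu>) (at \<rho> within {0..<\<delta>})"
    and F1: "\<And>\<mu>. D 0 0 \<mu> / of_nat (fact 0) = 0 \<and> D 1 0 \<mu> / of_nat (fact 1) = 0"
    and F2: "\<exists>C>0. \<forall>\<mu>. (\<Sum>j=2..\<gamma>. norm (D j 0 \<mu> / of_nat (fact j))) \<ge> C"
    and F3: "\<And>\<mu> \<rho> \<rho>'. 0 < \<rho> \<Longrightarrow> \<rho> \<le> \<rho>' \<Longrightarrow> \<rho>' < \<delta> \<Longrightarrow>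
        norm (D 1 \<rho> \<mu>) \<le> norm (D 1 \<rho>' \<mu>)"
    and F4: "\<And>k. \<exists>B. \<forall>\<mu> \<rho>. 0 < \<rho> \<and> \<rho> < \<delta> \<longrightarrow> norm (D k \<rho> \<mu>) \<le> B"
  shows "\<exists>\<delta>'>0. \<delta>' \<le> \<delta> \<and> (\<exists>C>0. \<exists>Cm :: nat \<Rightarrow> real. (\<forall>m. Cm m > 0) \<and>
           (\<forall>\<rho> \<mu> m. 0 < \<rho> \<and> \<rho> < \<delta>' \<longrightarrow>
              norm (D 1 \<rho> \<mu>) \<ge> C * \<rho> ^ (\<gamma> - 1) \<and>
              norm (D m \<rho> \<mu>) \<le> Cm m * \<rho> powr (1 - real m) * norm (D 1 \<rho> \<mu>)))"
proof -
  obtain B where B: "\<And>k \<mu> \<rho>. 0 \<le> \<rho> \<Longrightarrow> \<rho> < \<delta> \<Longrightarrow> norm (D k \<rho> \<mu>) \<le> B k"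
    using uniform_bounds_up_to_endpoint[of \<delta> D, OF delta smooth F4] by blast
  have tower: "derivative_tower (\<lambda>k r. D k r \<mu>) \<delta> B" for \<mu>
    using smooth B by unfold_locales
  have vanish: "D 0 0 \<mu> = 0" "D 1 0 \<mu> = 0" for \<mu>
    using F1[of \<mu>] by auto
  have mono: "mono_on {0<..<\<delta>} (\<lambda>\<rho>. norm (D 1 \<rho> \<mu>))" for \<mu>
    using F3 by (auto intro: mono_onI)
  obtain C0 where C0: "0 < C0" "\<And>\<mu>. C0 \<le> (\<Sum>j=2..\<gamma>. norm (D j 0 \<mu> / of_nat (fact j)))"
    using F2 by blast
  obtain c \<rho>0 where c: "0 < c" and \<rho>0: "0 < \<rho>0" and lower:
    "\<And>(d :: nat \<Rightarrow> real \<Rightarrow> complex) r. derivative_tower d \<delta> B \<Longrightarrow> d 1 0 = 0 \<Longrightarrow>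
       mono_on {0<..<\<delta>} (\<lambda>\<rho>. norm (d 1 \<rho>)) \<Longrightarrow> C0 \<le> (\<Sum>j=2..\<gamma>. norm (d j 0 / of_nat (fact j))) \<Longrightarrow>
       0 < r \<Longrightarrow> r < \<delta> \<Longrightarrow> r \<le> \<rho>0 \<Longrightarrow> c * r ^ (\<gamma> - 1) \<le> norm (d 1 r)"
    by (rule tower_lower_estimate[where 'a = complex and \<delta> = \<delta> and B = B, OF gamma C0(1)]) blast
  obtain Cm where Cm: "\<And>m. 0 < Cm m" and upper:
    "\<And>(d :: nat \<Rightarrow> real \<Rightarrow> complex) r m. derivative_tower d \<delta> B \<Longrightarrow> d 0 0 = 0 \<Longrightarrow>
       d 1 0 = 0 \<Longrightarrow> mono_on {0<..<\<delta>} (\<lambda>\<rho>. norm (d 1 \<rho>)) \<Longrightarrow> 0 < r \<Longrightarrow> r < \<delta> \<Longrightarrow> r \<le> 1 \<Longrightarrow>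
       c * r ^ (\<gamma> - 1) \<le> norm (d 1 r) \<Longrightarrow> norm (d m r) \<le> Cm m * r powr (1 - real m) * norm (d 1 r)"
    by (rule tower_upper_estimate[where 'a = complex and \<delta> = \<delta> and B = B and N = "\<gamma> - 1", OF c]) blast
  define \<delta>' where "\<delta>' = min \<delta> (min 1 \<rho>0)"
  have "0 < \<delta>'" "\<delta>' \<le> \<delta>"
    using delta \<rho>0 by (auto simp: \<delta>'_def)
  moreover have "c * r ^ (\<gamma> - 1) \<le> norm (D 1 r \<mu>) \<and>
      norm (D m r \<mu>) \<le> Cm m * r powr (1 - real m) * norm (D 1 r \<mu>)" if "0 < r" "r < \<delta>'" for r \<mu> m
  proof -
    have r: "0 < r" "r < \<delta>" "r \<le> 1" "r \<le> \<rho>0"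
      using that by (auto simp: \<delta>'_def)
    note lower_r = lower[OF tower vanish(2) mono C0(2) r(1,2,4)]
    then show ?thesis
      using upper[OF tower vanish mono r(1-3)] by simp
  qed
  ultimately show ?thesis
    using c Cm by blast
qed

end
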